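(* Let $N\geq4$, $z\in\mathbb{C}\setminus\{0\}$, and let $|X_N(z)\rangle=|1\rangle^{\otimes N}+z^{N-1}\sqrt N\,|W_N\rangle$, where $|W_N\rangle=\frac{1}{\sqrt N}\left(|10\cdots0\rangle+|010\cdots0\rangle+\cdots+|0\cdots01\rangle\right)$. Then $|X_N(z)\rangle=\frac{1}{N-1}\sum_{k=1}^{N-1}|x_k\rangle^{\otimes N}$ with $|x_k\rangle=|1\rangle+e^{2\pi i(k-1)/(N-1)}z|0\rangle$, and $D(X_N(z))=N-1$.
   Context: The one-qubit space is $\mathbb{C}^2$ with standard basis $\{|0\rangle,|1\rangle\}$; $\mathrm{Sym}_N\subset(\mathbb{C}^2)^{\otimes N}$ is the symmetric subspace. For a nonzero $|\psi\rangle\in\mathrm{Sym}_N$, the optimal bond dimension $D(\psi)$ is the minimal integer $D\geq1$ such that $|\psi\rangle=\sum_{k=1}^D|x_k\rangle^{\otimes N}$ for some (not necessarily normalized) vectors $|x_k\rangle\in\mathbb{C}^2$. *)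

theory Defs
  imports Complex_Main
begin

text \<open>A one-qubit vector in C^2 is a function q :: bool => complex,
  with q False the coefficient of |0> and q True the coefficient of |1>.
  A vector of (C^2)^(tensor N) is a function v :: bool list => complex whose
  coefficient at the computational basis state |b_1 ... b_N> is v [b_1,...,b_N]
  (True = 1, False = 0); it vanishes on lists of length different from N.\<close>

type_synonym qubit = "bool \<Rightarrow> complex"
type_synonym nqubit = "bool list \<Rightarrow> complex"

definition ket0 :: qubit where "ket0 = (\<lambda>b. if b then 0 else 1)"
definition ket1 :: qubit where "ket1 = (\<lambda>b. if b then 1 else 0)"

definition tensor_power :: "nat \<Rightarrow> qubit \<Rightarrow> nqubit" where
  "tensor_power N x = (\<lambda>bs. if length bs = N then prod_list (map x bs) else 0)"

definition W_state :: "nat \<Rightarrow> nqubit" where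
  "W_state N = (\<lambda>bs. if length bs = N \<and> length (filter id bs) = 1
                      then complex_of_real (1 / sqrt (real N)) else 0)"

definition X_state :: "nat \<Rightarrow> complex \<Rightarrow> nqubit" where
  "X_state N z = (\<lambda>bs. tensor_power N ket1 bs
      + z ^ (N - 1) * complex_of_real (sqrt (real N)) * W_state N bs)"

definition bond_dim :: "nat \<Rightarrow> nqubit \<Rightarrow> nat" where
  "bond_dim N psi = (LEAST D. D \<ge> 1 \<and>
      (\<exists>x :: nat \<Rightarrow> qubit. psi = (\<lambda>bs. \<Sum>k\<in>{1..D}. tensor_power N (x k) bs)))"

end

theory Submission
  imports Defs "HOL-Analysis.Analysis" "HOL-Computational_Algebra.Polynomial"
begin

text \<open>A product state is determined by how many of its N qubits are 0, so everything reduces to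
  the sequence of coefficients c_m of the basis states with m zeros. For X_N(z) this sequence is
  c_0 = 1, c_{N-1} = z^{N-1} and c_m = 0 otherwise. Averaging over the (N-1)-st roots of unity
  kills all terms of the binomial expansion except m = 0 and m = N - 1, giving the decomposition.
  Conversely, if X_N(z) = \<Sum>_k (a_k|0> + b_k|1>)^{\<otimes>N} with D \<le> N - 2 terms, then
  c_m = \<Sum>_k b_k^N t_k^m (t_k = a_k/b_k) is a power sum in at most D nodes for m \<le> N - 1.
  Such a sequence satisfies the linear recurrence given by the polynomial with roots t_k, so its
  D vanishing values c_{N-1-D}, ..., c_{N-2} force c_{N-1} = 0, contradicting z \<noteq> 0.\<close>

lemma sum_powers_roots_of_unity:
  fixes n m :: nat
  assumes "n \<ge> 1"
  shows "(\<Sum>k<n. exp (2 * pi * \<i> * of_nat k / of_nat n) ^ m) = (if n dvd m then of_nat n else 0)"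
proof -
  define \<zeta> where "\<zeta> = exp (2 * pi * \<i> * of_nat m / of_nat n)"
  have power_eq: "exp (2 * pi * \<i> * of_nat k / of_nat n) ^ m = \<zeta> ^ k" for k
  proof -
    have "exp (2 * pi * \<i> * of_nat k / of_nat n) ^ m = exp (of_nat m * (2 * pi * \<i> * of_nat k / of_nat n))"
      by (simp only: exp_of_nat_mult)
    also have "\<dots> = exp (of_nat k * (2 * pi * \<i> * of_nat m / of_nat n))"
      by (simp add: field_simps)
    finally show ?thesis by (simp only: exp_of_nat_mult \<zeta>_def)
  qed
  have \<zeta>_eq_1: "\<zeta> = 1 \<longleftrightarrow> n dvd m"
    unfolding \<zeta>_def using complex_root_unity_eq_1[OF assms] by simp
  have \<zeta>_root: "\<zeta> ^ n = 1"
    unfolding \<zeta>_def using complex_root_unity[of n m] assms by simp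
  have "(\<Sum>k<n. exp (2 * pi * \<i> * of_nat k / of_nat n) ^ m) = (\<Sum>k<n. \<zeta> ^ k)"
    by (simp only: power_eq)
  also have "\<dots> = (if n dvd m then of_nat n else 0)"
    using \<zeta>_eq_1 \<zeta>_root by (cases "n dvd m") (simp_all add: geometric_sum)
  finally show ?thesis .
qed

lemma tensor_power_eq:
  "tensor_power N q bs =
     (if length bs = N then q True ^ length (filter id bs) * q False ^ length (filter Not bs) else 0)"
proof -
  have "prod_list (map q bs) = q True ^ length (filter id bs) * q False ^ length (filter Not bs)"
    by (induction bs) (auto simp: algebra_simps)
  then show ?thesis by (simp add: tensor_power_def)
qed

lemma tensor_power_scale:
  "tensor_power N (\<lambda>b. r * q b) bs = r ^ N * tensor_power N q bs"
proof -
  have "prod_list (map (\<lambda>b. r * q b) bs) = r ^ length bs * prod_list (map q bs)"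
    by (induction bs) (auto simp: algebra_simps)
  then show ?thesis by (simp add: tensor_power_def)
qed

lemma length_filter_id_Not: "length (filter id bs) + length (filter Not bs) = length bs"
  using sum_length_filter_compl[of id bs] by (simp add: comp_def)

lemma X_state_eq:
  assumes "N \<ge> 2" and "length bs = N"
  defines "m \<equiv> length (filter Not bs)"
  shows "X_state N z bs = (if m = 0 then 1 else 0) + (if m = N - 1 then z ^ (N - 1) else 0)"
proof -
  have "length (filter id bs) = N - m"
    using length_filter_id_Not[of bs] assms(2) by (simp add: m_def)
  moreover have "complex_of_real (sqrt (real N)) * complex_of_real (1 / sqrt (real N)) = 1"
    using assms(1) by (simp flip: of_real_mult)
  ultimately show ?thesis
    using assms by (auto simp: X_state_def tensor_power_eq W_state_def ket1_def)
qed

lemma X_state_root_of_unity_decomposition: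
  fixes N :: nat and z :: complex
  assumes "N \<ge> 3"
  shows "X_state N z =
           (\<lambda>bs. (1 / of_nat (N - 1)) *
              (\<Sum>k\<in>{1..N-1}. tensor_power N
                 (\<lambda>b. ket1 b + exp (2 * pi * \<i> * of_nat (k - 1) / of_nat (N - 1)) * z * ket0 b) bs))"
    (is "_ = (\<lambda>bs. _ * (\<Sum>k\<in>_. tensor_power N (?x k) bs))")
proof
  fix bs :: "bool list"
  show "X_state N z bs = (1 / of_nat (N - 1)) * (\<Sum>k\<in>{1..N-1}. tensor_power N (?x k) bs)"
  proof (cases "length bs = N")
    case False
    then show ?thesis by (simp add: X_state_def tensor_power_eq W_state_def)
  next
    case True
    define m where "m = length (filter Not bs)"
    have "length (filter id bs) = N - m" and "m \<le> N"
      using length_filter_id_Not[of bs] True by (simp_all add: m_def)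
    then have "(\<Sum>k\<in>{1..N-1}. tensor_power N (?x k) bs)
        = (\<Sum>k\<in>{1..N-1}. exp (2 * pi * \<i> * of_nat (k - 1) / of_nat (N - 1)) ^ m) * z ^ m"
      by (simp add: tensor_power_eq True m_def[symmetric] ket0_def ket1_def
          sum_distrib_right power_mult_distrib)
    also have "\<dots> = (\<Sum>k<N-1. exp (2 * pi * \<i> * of_nat k / of_nat (N - 1)) ^ m) * z ^ m"
      using sum.atLeast_atMost_pred_shift[of "\<lambda>k. exp (2 * pi * \<i> * of_nat k / of_nat (N - 1)) ^ m" 0 "N - 2"]
        assms
      by (simp add: atLeast0AtMost lessThan_Suc_atMost[symmetric] comp_def Suc_diff_Suc numeral_2_eq_2)
    also have "\<dots> = (if (N - 1) dvd m then of_nat (N - 1) else 0) * z ^ m"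
      using sum_powers_roots_of_unity[of "N - 1" m] assms by simp
    finally have sum_eq: "(\<Sum>k\<in>{1..N-1}. tensor_power N (?x k) bs)
        = (if (N - 1) dvd m then of_nat (N - 1) else 0) * z ^ m" .
    have "(N - 1) dvd m \<longleftrightarrow> m = 0 \<or> m = N - 1"
    proof
      assume "(N - 1) dvd m"
      then obtain q where "m = (N - 1) * q" by auto
      have "q < 2"
      proof (rule ccontr)
        assume "\<not> q < 2"
        then have "(N - 1) * 2 \<le> m" using \<open>m = (N - 1) * q\<close> by simp
        with \<open>m \<le> N\<close> assms show False by linarith
      qed
      with \<open>m = (N - 1) * q\<close> show "m = 0 \<or> m = N - 1" by (cases q) auto
    qed auto
    then show ?thesis
      using sum_eq X_state_eq[of N bs z] True assms by (auto simp: m_def of_nat_diff)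
  qed
qed

lemma X_state_tensor_power_sum:
  assumes "N \<ge> 3"
  shows "\<exists>x. X_state N z = (\<lambda>bs. \<Sum>k\<in>{1..N-1}. tensor_power N (x k) bs)"
proof -
  define r where "r = complex_of_real (root N (1 / real (N - 1)))"
  define x where "x k b = r * (ket1 b + exp (2 * pi * \<i> * of_nat (k - 1) / of_nat (N - 1)) * z * ket0 b)"
    for k :: nat and b :: bool
  have "r ^ N = 1 / of_nat (N - 1)"
    using assms real_root_pow_pos2[of N "1 / real (N - 1)"]
    unfolding r_def by (simp flip: of_real_power add: of_nat_diff)
  then have "X_state N z = (\<lambda>bs. \<Sum>k\<in>{1..N-1}. tensor_power N (x k) bs)"
    unfolding x_def using X_state_root_of_unity_decomposition[OF assms, of z]
    by (simp add: tensor_power_scale sum_distrib_left)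
  then show ?thesis by blast
qed

lemma power_sum_vanishing_window:
  fixes w t :: "'a \<Rightarrow> 'b::idom"
  assumes "finite S" and vanish: "\<And>j. j < card S \<Longrightarrow> (\<Sum>k\<in>S. w k * t k ^ (i + j)) = 0"
  shows "(\<Sum>k\<in>S. w k * t k ^ (i + card S)) = 0"
proof -
  define P where "P = (\<Prod>k\<in>S. [:- t k, 1:])"
  have degree_P: "degree P = card S"
    unfolding P_def by (subst degree_prod_eq_sum_degree) auto
  have lead_P: "coeff P (card S) = 1"
    using lead_coeff_prod[of "\<lambda>k. [:- t k, 1:]" S] degree_P unfolding P_def by simp
  have root_P: "poly P (t k) = 0" if "k \<in> S" for k
    unfolding P_def poly_prod using that assms(1) by (auto intro: prod_zero)
  have "0 = (\<Sum>k\<in>S. w k * t k ^ i * poly P (t k))"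
    using root_P by simp
  also have "\<dots> = (\<Sum>j\<le>card S. coeff P j * (\<Sum>k\<in>S. w k * t k ^ (i + j)))"
    by (simp add: poly_altdef degree_P sum_distrib_left sum_distrib_right
        sum.swap[of _ "{..card S}"] power_add algebra_simps)
  also have "\<dots> = (\<Sum>k\<in>S. w k * t k ^ (i + card S))"
    using vanish lead_P by (simp add: lessThan_Suc_atMost[symmetric])
  finally show ?thesis by simp
qed

lemma sum_power_split_ratio:
  fixes a b :: "'a \<Rightarrow> 'b::field"
  assumes "finite K" and "m < N"
  shows "(\<Sum>k\<in>K. a k ^ m * b k ^ (N - m)) = (\<Sum>k\<in>{k\<in>K. b k \<noteq> 0}. b k ^ N * (a k / b k) ^ m)"
proof -
  have "(\<Sum>k\<in>K. a k ^ m * b k ^ (N - m)) = (\<Sum>k\<in>{k\<in>K. b k \<noteq> 0}. a k ^ m * b k ^ (N - m))"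
    using assms by (intro sum.mono_neutral_right) auto
  also have "\<dots> = (\<Sum>k\<in>{k\<in>K. b k \<noteq> 0}. b k ^ N * (a k / b k) ^ m)"
  proof (rule sum.cong)
    fix k assume "k \<in> {k\<in>K. b k \<noteq> 0}"
    moreover have "b k ^ N = b k ^ m * b k ^ (N - m)"
      using assms(2) by (simp flip: power_add)
    ultimately show "a k ^ m * b k ^ (N - m) = b k ^ N * (a k / b k) ^ m"
      by (simp add: power_divide)
  qed simp
  finally show ?thesis .
qed

lemma X_state_bond_dim_lower:
  fixes N :: nat and z :: complex and x :: "nat \<Rightarrow> qubit"
  assumes "N \<ge> 2" and "z \<noteq> 0"
    and rep: "X_state N z = (\<lambda>bs. \<Sum>k\<in>{1..D}. tensor_power N (x k) bs)"
  shows "N - 1 \<le> D"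
proof (rule ccontr)
  assume "\<not> N - 1 \<le> D"
  define S where "S = {k\<in>{1..D}. x k True \<noteq> 0}"
  define w where "w k = x k True ^ N" for k
  define t where "t k = x k False / x k True" for k
  define c where "c m = X_state N z (replicate m False @ replicate (N - m) True)" for m
  have c_power_sum: "c m = (\<Sum>k\<in>S. w k * t k ^ m)" if "m \<le> N - 1" for m
  proof -
    have "c m = (\<Sum>k\<in>{1..D}. x k False ^ m * x k True ^ (N - m))"
      using that unfolding c_def rep by (simp add: tensor_power_eq mult.commute)
    also have "\<dots> = (\<Sum>k\<in>S. w k * t k ^ m)"
      using that assms(1) unfolding S_def w_def t_def by (intro sum_power_split_ratio) auto
    finally show ?thesis .
  qed
  have "length (filter Not (replicate m False @ replicate (N - m) True)) = m" if "m \<le> N" for m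
    using that by simp
  then have c_eq: "c m = (if m = 0 then 1 else 0) + (if m = N - 1 then z ^ (N - 1) else 0)"
    if "m \<le> N" for m
    using that assms(1) X_state_eq[of N "replicate m False @ replicate (N - m) True" z]
    unfolding c_def by simp
  have "card S \<le> card {1..D}"
    unfolding S_def by (intro card_mono) auto
  then have card_S: "card S \<le> D" by simp
  define i where "i = N - 1 - card S"
  have "(\<Sum>k\<in>S. w k * t k ^ (i + card S)) = 0"
  proof (rule power_sum_vanishing_window)
    show "finite S" by (simp add: S_def)
    fix j assume "j < card S"
    then have "1 \<le> i + j" and "i + j < N - 1"
      using card_S \<open>\<not> N - 1 \<le> D\<close> by (simp_all add: i_def)
    then show "(\<Sum>k\<in>S. w k * t k ^ (i + j)) = 0"
      using c_power_sum[of "i + j"] c_eq[of "i + j"] by (simp split: if_split_asm)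
  qed
  moreover have "i + card S = N - 1"
    using card_S \<open>\<not> N - 1 \<le> D\<close> by (simp add: i_def)
  ultimately have "z ^ (N - 1) = 0"
    using c_power_sum[of "N - 1"] c_eq[of "N - 1"] assms(1) by simp
  with assms(2) show False by simp
qed

theorem mainTheorem11:
  fixes N :: nat and z :: complex
  assumes "N \<ge> 4" and "z \<noteq> 0"
  shows "X_state N z =
           (\<lambda>bs. (1 / of_nat (N - 1)) *
              (\<Sum>k\<in>{1..N-1}. tensor_power N
                 (\<lambda>b. ket1 b + exp (2 * pi * \<i> * of_nat (k - 1) / of_nat (N - 1)) * z * ket0 b) bs))
         \<and> bond_dim N (X_state N z) = N - 1"
    (is "?decomposition \<and> _")
proof
  show ?decomposition
    using X_state_root_of_unity_decomposition assms(1) by simp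
  have "N - 1 \<ge> 1 \<and> (\<exists>x. X_state N z = (\<lambda>bs. \<Sum>k\<in>{1..N-1}. tensor_power N (x k) bs))"
    using X_state_tensor_power_sum[of N z] assms(1) by simp
  then show "bond_dim N (X_state N z) = N - 1"
    unfolding bond_dim_def
  proof (rule Least_equality)
    fix D :: nat assume "D \<ge> 1 \<and> (\<exists>y. X_state N z = (\<lambda>bs. \<Sum>k\<in>{1..D}. tensor_power N (y k) bs))"
    then obtain y where "X_state N z = (\<lambda>bs. \<Sum>k\<in>{1..D}. tensor_power N (y k) bs)"
      by blast
    with assms show "N - 1 \<le> D"
      by (intro X_state_bond_dim_lower) auto
  qed
qed

end
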